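(* Let $\vec\Sigma$ be a finite sequence of finite connected tight labeled core graphs over $\mathcal B$ and let $\alpha$ be an elementary Whitehead automorphism with distinguished label $b$. Let $e$ be an edge of $\vec\Sigma$ with label $c\notin\{b,b^{-1}\}$ and let $e'$ be the image in $\mathrm{tight}(\alpha\vec\Sigma)$ of the unique subedge of $\alpha(e)$ labeled $c$. Then $e'$ lies in $\alpha_\#\vec\Sigma=\mathrm{core}(\mathrm{tight}(\alpha\vec\Sigma))$. Consequently $e\mapsto e'$ is a bijection between the edges of $\vec\Sigma$ not labeled $b^{\pm1}$ and the edges of $\alpha_\#\vec\Sigma$ not labeled $b^{\pm1}$.
   Context: $F(\mathcal B)$ is the free group on the finite set $\mathcal B$. A labeled graph assigns labels in $\mathcal B^{\pm1}$ to oriented edges, $e^{-1}$ carrying the inverse label; it is tight if distinct oriented edges with the same initial vertex have distinct labels. The core of a graph is the union of all edges crossed by immersed loops (cyclically reduced closed edge paths); a core graph equals its core. $\mathrm{tight}(\Sigma)$ is the result of iteratively folding (identifying two distinct oriented edges with common initial vertex and equal labels) until tight, with quotient map $\Sigma\to\mathrm{tight}(\Sigma)$. For $\alpha\in\mathrm{Aut}(F(\mathcal B))$, $\alpha\Sigma$ replaces each oriented edge labeled $c$ by a path spelling the reduced word $\alpha(c)$. Operations on sequences are componentwise. An elementary Whitehead automorphism is either induced by a permutation $\pi$ of $\mathcal B^{\pm1}$ with $\pi(c^{-1})=\pi(c)^{-1}$, or is determined by $b\in\mathcal B^{\pm1}$ (the distinguished label) and $A\subset\mathcal B^{\pm1}\setminus\{b^{\pm1}\}$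 via $\alpha(b)=b$, $\alpha(c)=b^{\epsilon(c)}\,c\,b^{-\epsilon(c^{-1})}$ for $c\neq b^{\pm1}$, where $\epsilon(x)=1$ if $x\in A$ and $0$ otherwise. *)

theory Defs
  imports Main
begin

text \<open>The alphabet B is a (finite) type 'b. A signed label (c, True) stands for c,
  (c, False) for c^{-1}.\<close>

type_synonym 'b slabel = "'b \<times> bool"

definition linv :: "'b slabel \<Rightarrow> 'b slabel" where
  "linv x = (fst x, \<not> snd x)"

text \<open>Each (unoriented) edge carries a label for a fixed reference orientation;
  the oriented edge (e, True) runs from src e to tgt e and is labeled lab e,
  the oriented edge (e, False) = e^{-1} runs backwards with label linv (lab e).\<close>

record ('v, 'e, 'b) lgraph =
  verts :: "'v set"
  edges :: "'e set"
  src :: "'e \<Rightarrow> 'v"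
  tgt :: "'e \<Rightarrow> 'v"
  lab :: "'e \<Rightarrow> 'b slabel"

definition wf_graph :: "('v, 'e, 'b) lgraph \<Rightarrow> bool" where
  "wf_graph G \<longleftrightarrow> src G ` edges G \<subseteq> verts G \<and> tgt G ` edges G \<subseteq> verts G"

definition finite_graph :: "('v, 'e, 'b) lgraph \<Rightarrow> bool" where
  "finite_graph G \<longleftrightarrow> finite (verts G) \<and> finite (edges G)"

definition oedges :: "('v, 'e, 'b) lgraph \<Rightarrow> ('e \<times> bool) set" where
  "oedges G = edges G \<times> UNIV"

definition oinv :: "'e \<times> bool \<Rightarrow> 'e \<times> bool" where
  "oinv o' = (fst o', \<not> snd o')"

definition oinit :: "('v, 'e, 'b) lgraph \<Rightarrow> 'e \<times> bool \<Rightarrow> 'v" where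
  "oinit G o' = (if snd o' then src G (fst o') else tgt G (fst o'))"

definition oterm :: "('v, 'e, 'b) lgraph \<Rightarrow> 'e \<times> bool \<Rightarrow> 'v" where
  "oterm G o' = (if snd o' then tgt G (fst o') else src G (fst o'))"

definition olab :: "('v, 'e, 'b) lgraph \<Rightarrow> 'e \<times> bool \<Rightarrow> 'b slabel" where
  "olab G o' = (if snd o' then lab G (fst o') else linv (lab G (fst o')))"

definition adj :: "('v, 'e, 'b) lgraph \<Rightarrow> ('v \<times> 'v) set" where
  "adj G = {(src G e, tgt G e) | e. e \<in> edges G} \<union> {(tgt G e, src G e) | e. e \<in> edges G}"

definition connected_graph :: "('v, 'e, 'b) lgraph \<Rightarrow> bool" where
  "connected_graph G \<longleftrightarrow> verts G \<noteq> {} \<and> (\<forall>u\<in>verts G. \<forall>v\<in>verts G. (u, v) \<in> (adj G)\<^sup>*)"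

definition tight_graph :: "('v, 'e, 'b) lgraph \<Rightarrow> bool" where
  "tight_graph G \<longleftrightarrow> (\<forall>o1\<in>oedges G. \<forall>o2\<in>oedges G.
      o1 \<noteq> o2 \<and> oinit G o1 = oinit G o2 \<longrightarrow> olab G o1 \<noteq> olab G o2)"

definition immersed_loop :: "('v, 'e, 'b) lgraph \<Rightarrow> ('e \<times> bool) list \<Rightarrow> bool" where
  "immersed_loop G p \<longleftrightarrow> p \<noteq> [] \<and> set p \<subseteq> oedges G \<and>
     (\<forall>i < length p. oterm G (p ! i) = oinit G (p ! (Suc i mod length p)) \<and>
                     p ! (Suc i mod length p) \<noteq> oinv (p ! i))"

definition core_edges :: "('v, 'e, 'b) lgraph \<Rightarrow> 'e set" where
  "core_edges G = {e \<in> edges G. \<exists>p d. immersed_loop G p \<and> (e, d) \<in> set p}"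

definition core :: "('v, 'e, 'b) lgraph \<Rightarrow> ('v, 'e, 'b) lgraph" where
  "core G = G\<lparr> verts := src G ` core_edges G \<union> tgt G ` core_edges G,
              edges := core_edges G \<rparr>"

definition is_core :: "('v, 'e, 'b) lgraph \<Rightarrow> bool" where
  "is_core G \<longleftrightarrow> core G = G"

text \<open>The equivalence relations on vertices and on oriented edges produced by
  iterated folding: the least equivalences (compatible with inversion and
  incidence) that identify any two oriented edges with (identified) common initial
  vertex and equal labels.\<close>
inductive fveq :: "('v, 'e, 'b) lgraph \<Rightarrow> 'v \<Rightarrow> 'v \<Rightarrow> bool"
  and foeq :: "('v, 'e, 'b) lgraph \<Rightarrow> 'e \<times> bool \<Rightarrow> 'e \<times> bool \<Rightarrow> bool"
  for G where
  fv_refl: "v \<in> verts G \<Longrightarrow> fveq G v v"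
| fv_sym: "fveq G u v \<Longrightarrow> fveq G v u"
| fv_trans: "fveq G u v \<Longrightarrow> fveq G v w \<Longrightarrow> fveq G u w"
| fv_init: "foeq G o1 o2 \<Longrightarrow> fveq G (oinit G o1) (oinit G o2)"
| fo_refl: "o1 \<in> oedges G \<Longrightarrow> foeq G o1 o1"
| fo_sym: "foeq G o1 o2 \<Longrightarrow> foeq G o2 o1"
| fo_trans: "foeq G o1 o2 \<Longrightarrow> foeq G o2 o3 \<Longrightarrow> foeq G o1 o3"
| fo_inv: "foeq G o1 o2 \<Longrightarrow> foeq G (oinv o1) (oinv o2)"
| fo_fold: "o1 \<in> oedges G \<Longrightarrow> o2 \<in> oedges G \<Longrightarrow> fveq G (oinit G o1) (oinit G o2) \<Longrightarrow>
             olab G o1 = olab G o2 \<Longrightarrow> foeq G o1 o2"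

definition vclass :: "('v, 'e, 'b) lgraph \<Rightarrow> 'v \<Rightarrow> 'v set" where
  "vclass G v = {u. fveq G v u}"

definition oclass :: "('v, 'e, 'b) lgraph \<Rightarrow> 'e \<times> bool \<Rightarrow> ('e \<times> bool) set" where
  "oclass G o' = {o2. foeq G o' o2}"

definition posor :: "('v, 'e, 'b) lgraph \<Rightarrow> 'e \<Rightarrow> 'e \<times> bool" where
  "posor G e = (e, snd (lab G e))"

definition qedge :: "('v, 'e, 'b) lgraph \<Rightarrow> 'e \<Rightarrow> ('e \<times> bool) set" where
  "qedge G e = oclass G (posor G e)"

definition tight :: "('v, 'e, 'b) lgraph \<Rightarrow> ('v set, ('e \<times> bool) set, 'b) lgraph" where
  "tight G = \<lparr> verts = vclass G ` verts G,
               edges = qedge G ` edges G,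
               src = (\<lambda>E. {v. \<exists>o'\<in>E. fveq G (oinit G o') v}),
               tgt = (\<lambda>E. {v. \<exists>o'\<in>E. fveq G (oterm G o') v}),
               lab = (\<lambda>E. olab G (SOME o'. o' \<in> E)) \<rparr>"

text \<open>Each edge e is replaced by a path spelling the word phi (lab e); the k-th
  subedge of e is (e, k).\<close>
definition subpt :: "('b slabel \<Rightarrow> 'b slabel list) \<Rightarrow> ('v, 'e, 'b) lgraph \<Rightarrow> 'e \<Rightarrow> nat \<Rightarrow> 'v + 'e \<times> nat" where
  "subpt phi G e k = (if k = 0 then Inl (src G e)
       else if k = length (phi (lab G e)) then Inl (tgt G e) else Inr (e, k))"

definition subdiv :: "('b slabel \<Rightarrow> 'b slabel list) \<Rightarrow> ('v, 'e, 'b) lgraph \<Rightarrow> ('v + 'e \<times> nat, 'e \<times> nat, 'b) lgraph" where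
  "subdiv phi G = \<lparr> verts = Inl ` verts G \<union> {Inr (e, k) | e k. e \<in> edges G \<and> 0 < k \<and> k < length (phi (lab G e))},
                    edges = {(e, k). e \<in> edges G \<and> k < length (phi (lab G e))},
                    src = (\<lambda>(e, k). subpt phi G e k),
                    tgt = (\<lambda>(e, k). subpt phi G e (Suc k)),
                    lab = (\<lambda>(e, k). phi (lab G e) ! k) \<rparr>"

text \<open>alpha(b^{+-1}) = b^{+-1}, alpha(c) = b^{eps c} c b^{-eps (c^{-1})} otherwise,
  where eps x = 1 iff x in A; the value is the (already reduced) word alpha(c).\<close>
definition whw :: "'b slabel \<Rightarrow> 'b slabel set \<Rightarrow> 'b slabel \<Rightarrow> 'b slabel list" where
  "whw b A x = (if fst x = fst b then [x]
       else (if x \<in> A then [b] else []) @ [x] @ (if linv x \<in> A then [linv b] else []))"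

definition seq_edges :: "('v, 'e, 'b) lgraph list \<Rightarrow> (nat \<times> 'e) set" where
  "seq_edges Gs = {(i, e). i < length Gs \<and> e \<in> edges (Gs ! i)}"

definition alpha_sharp :: "'b slabel \<Rightarrow> 'b slabel set \<Rightarrow> ('v, 'e, 'b) lgraph list
    \<Rightarrow> (('v + 'e \<times> nat) set, (('e \<times> nat) \<times> bool) set, 'b) lgraph list" where
  "alpha_sharp b A Gs = map (\<lambda>G. core (tight (subdiv (whw b A) G))) Gs"

definition cidx :: "'b slabel \<Rightarrow> 'b slabel set \<Rightarrow> 'b slabel \<Rightarrow> nat" where
  "cidx b A x = (THE k. k < length (whw b A x) \<and> fst (whw b A x ! k) = fst x)"

definition eprime :: "'b slabel \<Rightarrow> 'b slabel set \<Rightarrow> ('v, 'e, 'b) lgraph list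
    \<Rightarrow> nat \<times> 'e \<Rightarrow> nat \<times> (('e \<times> nat) \<times> bool) set" where
  "eprime b A Gs ie = (case ie of (i, e) \<Rightarrow>
     (i, qedge (subdiv (whw b A) (Gs ! i)) (e, cidx b A (lab (Gs ! i) e))))"

end

theory Submission
  imports Defs
begin

(* Let G be a tight core graph and T = tight(alpha G). Folding alpha G can be described
  explicitly: the vertices of G survive, and the subdivision vertex reached from v by a letter
  b is identified with the other end of the b-edge of G at v if there is one (unique by
  tightness), and otherwise with a new vertex. Tagging vertices and subedges of alpha G
  accordingly, every folding step preserves the tags. Hence no two subedges carrying letters
  c <> b^{+-1} are ever identified, and every edge of T with such a label comes from G.

  For e' to lie in the core, take an immersed loop of G through e and cut it into blocks
  c r c', where r is a run of b-edges. Lift each block to the image of c followed by a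
  "bridge": the letters b^{+-1} that alpha adds at the end of c and at the start of c' cancel
  against the first edge of r or against each other, and the remaining path does not
  backtrack in T, since the tags of consecutive edges differ. This gives an immersed loop of
  T through e'. *)

lemma linv_linv [simp]: "linv (linv x) = x" by (simp add: linv_def)
lemma fst_linv [simp]: "fst (linv x) = fst x" by (simp add: linv_def)
lemma linv_neq [simp]: "linv x \<noteq> x" "x \<noteq> linv x" by (auto simp: linv_def prod_eq_iff)
lemma linv_inject [simp]: "linv x = linv y \<longleftrightarrow> x = y" by (auto simp: linv_def prod_eq_iff)

lemma fst_eq_cases: "fst x = fst y \<Longrightarrow> x = y \<or> x = linv y"
  by (cases x; cases y) (auto simp: linv_def)

lemma oinv_oinv [simp]: "oinv (oinv x) = x" by (simp add: oinv_def)
lemma oinit_oinv [simp]: "oinit G (oinv x) = oterm G x" by (simp add: oinit_def oterm_def oinv_def)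
lemma oterm_oinv [simp]: "oterm G (oinv x) = oinit G x" by (simp add: oinit_def oterm_def oinv_def)
lemma olab_oinv [simp]: "olab G (oinv x) = linv (olab G x)" by (simp add: olab_def oinv_def)
lemma oinv_in_oedges [simp]: "oinv x \<in> oedges G \<longleftrightarrow> x \<in> oedges G"
  by (cases x) (simp add: oedges_def oinv_def)
lemma oinv_inject [simp]: "oinv x = oinv y \<longleftrightarrow> x = y" by (auto simp: oinv_def prod_eq_iff)
lemma fst_oinv [simp]: "fst (oinv x) = fst x" by (simp add: oinv_def)
lemma snd_oinv [simp]: "snd (oinv x) = (\<not> snd x)" by (simp add: oinv_def)
lemma fst_olab: "fst (olab G x) = fst (lab G (fst x))" by (simp add: olab_def)

lemma whw_non_b: "fst x \<noteq> fst b \<Longrightarrow> whw b A x =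
   (if x \<in> A then [b] else []) @ [x] @ (if linv x \<in> A then [linv b] else [])"
  by (simp add: whw_def)

lemma whw_b: "fst x = fst b \<Longrightarrow> whw b A x = [x]"
  by (simp add: whw_def)

lemma whw_letter_unique:
  assumes "fst x \<noteq> fst b"
  shows "\<exists>!k. k < length (whw b A x) \<and> fst (whw b A x ! k) = fst x"
proof (rule ex1I)
  show "(if x \<in> A then 1 else 0) < length (whw b A x) \<and>
      fst (whw b A x ! (if x \<in> A then 1 else 0)) = fst x"
    using assms by (simp add: whw_non_b nth_append)
next
  fix k assume "k < length (whw b A x) \<and> fst (whw b A x ! k) = fst x"
  then show "k = (if x \<in> A then 1 else 0)"
    using assms by (auto simp: whw_non_b nth_append nth_Cons' split: if_splits)
qed

lemma cidx_eq: "fst x \<noteq> fst b \<Longrightarrow> cidx b A x = (if x \<in> A then 1 else 0)"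
  unfolding cidx_def
  by (rule the1_equality[OF whw_letter_unique]) (auto simp: whw_non_b nth_append)

lemma length_whw: "fst x \<noteq> fst b \<Longrightarrow>
    length (whw b A x) = Suc (cidx b A x + (if linv x \<in> A then 1 else 0))"
  by (simp add: whw_non_b cidx_eq)

lemma whw_nth_cidx: "fst x \<noteq> fst b \<Longrightarrow> whw b A x ! cidx b A x = x"
  by (simp add: whw_non_b cidx_eq nth_append)

lemma whw_nth_other: "fst x \<noteq> fst b \<Longrightarrow> k < length (whw b A x) \<Longrightarrow> k \<noteq> cidx b A x \<Longrightarrow>
   (k = 0 \<and> x \<in> A \<and> whw b A x ! k = b) \<or>
   (k = Suc (cidx b A x) \<and> linv x \<in> A \<and> whw b A x ! k = linv b)"
  by (auto simp: whw_non_b cidx_eq nth_append split: if_splits)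

lemma fst_whw_nth_non_b: "fst x \<noteq> fst b \<Longrightarrow> k < length (whw b A x) \<Longrightarrow>
   fst (whw b A x ! k) \<noteq> fst b \<longleftrightarrow> k = cidx b A x"
  using whw_nth_other[of x b k A] whw_nth_cidx[of x b A] by (cases "k = cidx b A x") auto

subsection \<open>Cyclic lists and blocks\<close>

definition cyclically :: "('a \<Rightarrow> 'a \<Rightarrow> bool) \<Rightarrow> 'a list \<Rightarrow> bool" where
  "cyclically R xs \<longleftrightarrow> (\<forall>i<length xs. R (xs ! i) (xs ! (Suc i mod length xs)))"

lemma cyclically_iff_successively:
  assumes "xs \<noteq> []"
  shows "cyclically R xs \<longleftrightarrow> successively R xs \<and> R (last xs) (hd xs)"
proof -
  let ?n = "length xs"
  have "(\<forall>i<?n. R (xs ! i) (xs ! (Suc i mod ?n))) \<longleftrightarrow>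
        (\<forall>i. Suc i < ?n \<longrightarrow> R (xs ! i) (xs ! Suc i)) \<and> R (xs ! (?n - 1)) (xs ! 0)"
  proof safe
    fix i assume "\<forall>i<?n. R (xs ! i) (xs ! (Suc i mod ?n))" "Suc i < ?n"
    then show "R (xs ! i) (xs ! Suc i)" by (metis Suc_lessD mod_less)
  next
    assume "\<forall>i<?n. R (xs ! i) (xs ! (Suc i mod ?n))"
    then show "R (xs ! (?n - 1)) (xs ! 0)" using assms by (force dest: spec[of _ "?n - 1"])
  next
    fix i assume "\<forall>i. Suc i < ?n \<longrightarrow> R (xs ! i) (xs ! Suc i)" "R (xs ! (?n - 1)) (xs ! 0)" "i < ?n"
    then show "R (xs ! i) (xs ! (Suc i mod ?n))"
    proof (cases "Suc i < ?n")
      case False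
      then have "Suc i = ?n" using \<open>i < ?n\<close> by simp
      then have "i = ?n - 1" "Suc i mod ?n = 0" by auto
      then show ?thesis using \<open>R (xs ! (?n - 1)) (xs ! 0)\<close> by simp
    qed simp
  qed
  then show ?thesis
    unfolding cyclically_def successively_conv_nth
    using assms by (simp add: last_conv_nth hd_conv_nth)
qed

lemma last_concat_nonempty:
  "segs \<noteq> [] \<Longrightarrow> \<forall>s\<in>set segs. s \<noteq> [] \<Longrightarrow> last (concat segs) = last (last segs)"
  by (induction segs) auto

lemma successively_concat:
  "\<forall>s\<in>set segs. s \<noteq> [] \<Longrightarrow> successively R (concat segs) \<longleftrightarrow>
   (\<forall>s\<in>set segs. successively R s) \<and> successively (\<lambda>s t. R (last s) (hd t)) segs"
proof (induction segs)
  case (Cons s segs)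
  then show ?case
    by (cases segs) (auto simp: successively_append_iff successively_Cons hd_concat)
qed simp

lemma cyclically_concat:
  assumes "segs \<noteq> []" "\<forall>s\<in>set segs. s \<noteq> []"
  shows "cyclically R (concat segs) \<longleftrightarrow>
   (\<forall>s\<in>set segs. successively R s) \<and> cyclically (\<lambda>s t. R (last s) (hd t)) segs"
proof -
  have "concat segs \<noteq> []" using assms by (cases segs) auto
  then show ?thesis
    using assms by (simp add: cyclically_iff_successively successively_concat hd_concat
        last_concat_nonempty)
qed

lemma Suc_mod_length_less: "i < length xs \<Longrightarrow> Suc i mod length xs < length xs"
  by (intro mod_less_divisor) auto

lemma cyclically_map: "cyclically R (map f xs) \<longleftrightarrow> cyclically (\<lambda>x y. R (f x) (f y)) xs"
  unfolding cyclically_def by (simp add: Suc_mod_length_less)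

lemma cyclically_mono:
  assumes "cyclically R xs" "\<And>x y. x \<in> set xs \<Longrightarrow> y \<in> set xs \<Longrightarrow> R x y \<Longrightarrow> Q x y"
  shows "cyclically Q xs"
  using assms unfolding cyclically_def by (meson nth_mem Suc_mod_length_less)

lemma cyclically_rotate1: "cyclically R xs \<Longrightarrow> cyclically R (rotate1 xs)"
proof (cases xs)
  case (Cons x ys)
  assume "cyclically R xs"
  then have "successively R (x # ys)" "R (last (x # ys)) x"
    using Cons cyclically_iff_successively[of xs R] by auto
  then show ?thesis
    using Cons by (cases "ys = []")
      (auto simp: cyclically_iff_successively successively_append_iff successively_Cons)
qed simp

lemma cyclically_rotate: "cyclically R xs \<Longrightarrow> cyclically R (rotate k xs)"
  by (induction k) (auto simp: cyclically_rotate1)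

lemma cyclically_concat_segments:
  assumes "m > 0" "\<And>t. t < m \<Longrightarrow> seg t \<noteq> []"
    and "\<And>t. t < m \<Longrightarrow> successively R (seg t @ [hd (seg (Suc t mod m))])"
  shows "cyclically R (concat (map seg [0..<m]))"
proof -
  have "successively R (seg t)" if "t < m" for t
    using assms(3)[OF that] by (simp add: successively_append_iff)
  moreover have "R (last (seg t)) (hd (seg (Suc t mod m)))" if "t < m" for t
    using assms(2,3)[OF that] by (simp add: successively_append_iff)
  then have "cyclically (\<lambda>s u. R (last s) (hd u)) (map seg [0..<m])"
    by (simp add: cyclically_def)
  ultimately show ?thesis
    using assms(1,2) by (subst cyclically_concat) auto
qed

function blocks :: "('a \<Rightarrow> bool) \<Rightarrow> 'a list \<Rightarrow> ('a \<times> 'a list) list" where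
  "blocks P [] = []"
| "blocks P (x # xs) = (x, takeWhile P xs) # blocks P (dropWhile P xs)"
  by pat_completeness auto
termination
  by (relation "measure (\<lambda>(P, xs). length xs)") (auto simp: le_imp_less_Suc length_dropWhile_le)

lemma concat_blocks: "concat (map (\<lambda>(c, r). c # r) (blocks P xs)) = xs"
  by (induction P xs rule: blocks.induct) auto

lemma blocks_run: "(c, r) \<in> set (blocks P xs) \<Longrightarrow> y \<in> set r \<Longrightarrow> P y"
  by (induction P xs rule: blocks.induct) (auto dest: set_takeWhileD)

lemma blocks_head: "xs = [] \<or> \<not> P (hd xs) \<Longrightarrow> (c, r) \<in> set (blocks P xs) \<Longrightarrow> \<not> P c"
proof (induction P xs rule: blocks.induct)
  case (2 P x xs)
  have "dropWhile P xs = [] \<or> \<not> P (hd (dropWhile P xs))"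
    by (metis hd_dropWhile)
  then show ?case using 2 by auto
qed simp

lemma blocks_subset: "(c, r) \<in> set (blocks P xs) \<Longrightarrow> set (c # r) \<subseteq> set xs"
  by (induction P xs rule: blocks.induct) (auto dest: set_takeWhileD set_dropWhileD)

lemma hd_blocks: "xs \<noteq> [] \<Longrightarrow> blocks P xs \<noteq> [] \<and> fst (hd (blocks P xs)) = hd xs"
  by (cases xs) auto

lemma cyclically_blocks:
  assumes "cyclically R xs" "xs \<noteq> []"
  shows "cyclically (\<lambda>(c, r) (c', r'). successively R (c # r @ [c'])) (blocks P xs)"
proof -
  let ?segs = "map (\<lambda>(c, r). c # r) (blocks P xs)"
  have "?segs \<noteq> []" using hd_blocks[OF assms(2)] by simp
  moreover have "\<forall>s\<in>set ?segs. s \<noteq> []" by auto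
  ultimately have segs: "\<forall>s\<in>set ?segs. successively R s"
    "cyclically (\<lambda>s t. R (last s) (hd t)) ?segs"
    using assms(1) cyclically_concat[of ?segs R] by (simp_all add: concat_blocks)
  show ?thesis
  proof (rule cyclically_mono)
    show "cyclically (\<lambda>x y. R (last (fst x # snd x)) (fst y)) (blocks P xs)"
      using segs(2) by (simp add: cyclically_map split_def)
    fix x y assume "x \<in> set (blocks P xs)" "R (last (fst x # snd x)) (fst y)"
    moreover have "successively R (fst x # snd x)" using segs(1) \<open>x \<in> set (blocks P xs)\<close>
      by (auto simp: split_def)
    ultimately show "(\<lambda>(c, r) (c', r'). successively R (c # r @ [c'])) x y"
      using successively_append_iff[of R "fst x # snd x" "[fst y]"] by (simp add: split_def)
  qed
qed

definition reduced_step :: "('v, 'e, 'b) lgraph \<Rightarrow> 'e \<times> bool \<Rightarrow> 'e \<times> bool \<Rightarrow> bool" where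
  "reduced_step G x y \<longleftrightarrow> oterm G x = oinit G y \<and> y \<noteq> oinv x"

lemma reduced_step_rev: "reduced_step G x y \<Longrightarrow> reduced_step G (oinv y) (oinv x)"
  unfolding reduced_step_def by auto

lemma immersed_loop_iff_cyclically: "immersed_loop G p \<longleftrightarrow>
    p \<noteq> [] \<and> set p \<subseteq> oedges G \<and> cyclically (reduced_step G) p"
  unfolding immersed_loop_def cyclically_def reduced_step_def by auto

lemma immersed_loop_rotate:
  assumes "immersed_loop G p" "z \<in> set p"
  obtains q where "immersed_loop G q" "hd q = z"
proof -
  obtain i where i: "i < length p" "p ! i = z" using assms(2) by (auto simp: in_set_conv_nth)
  have "rotate i p \<noteq> []" using i by auto
  then have "hd (rotate i p) = rotate i p ! 0" by (rule hd_conv_nth)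
  also have "\<dots> = p ! ((i + 0) mod length p)" using i by (intro nth_rotate) auto
  finally have "hd (rotate i p) = z" using i by simp
  moreover have "immersed_loop G (rotate i p)"
    using assms(1) unfolding immersed_loop_iff_cyclically by (auto simp: cyclically_rotate)
  ultimately show thesis using that by blast
qed

lemma successively_rev_map_oinv:
  assumes "successively R xs" "\<And>x y. R x y \<Longrightarrow> R (oinv y) (oinv x)"
  shows "successively R (rev (map oinv xs))"
  unfolding successively_rev successively_map using assms(1)
  by (rule successively_mono) (use assms(2) in blast)

subsection \<open>Folding\<close>

lemma foeq_oedges_olab:
  assumes "foeq H y1 y2"
  shows "y1 \<in> oedges H \<and> y2 \<in> oedges H \<and> olab H y1 = olab H y2"
proof -
  have "(fveq H u w \<longrightarrow> True) \<and>
      (foeq H z1 z2 \<longrightarrow> z1 \<in> oedges H \<and> z2 \<in> oedges H \<and> olab H z1 = olab H z2)" for u w z1 z2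
    by (induction rule: fveq_foeq.induct) auto
  then show ?thesis using assms by blast
qed

lemma foeq_olab: "foeq H y1 y2 \<Longrightarrow> olab H y1 = olab H y2"
  using foeq_oedges_olab by blast

lemma fveq_oinit_refl: "y \<in> oedges H \<Longrightarrow> fveq H (oinit H y) (oinit H y)"
  by (rule fv_init, rule fo_refl)

lemma fveq_oterm_fold:
  assumes "y1 \<in> oedges H" "y2 \<in> oedges H" "olab H y1 = olab H y2"
    "fveq H (oinit H y1) (oinit H y2)"
  shows "fveq H (oterm H y1) (oterm H y2)"
proof -
  have "foeq H y1 y2" using assms by (intro fo_fold)
  then have "foeq H (oinv y1) (oinv y2)" by (rule fo_inv)
  then show ?thesis using fv_init by fastforce
qed

lemma vclass_eq: "fveq H u w \<Longrightarrow> vclass H u = vclass H w"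
  unfolding vclass_def by (auto intro: fv_trans fv_sym)

lemma posor_in_qedge: "e \<in> edges H \<Longrightarrow> posor H e \<in> qedge H e"
  by (simp add: posor_def oedges_def qedge_def oclass_def fo_refl)

lemma fst_lab_tight_qedge:
  assumes "e \<in> edges H"
  shows "fst (lab (tight H) (qedge H e)) = fst (lab H e)"
proof -
  have "(SOME y. y \<in> qedge H e) \<in> qedge H e"
    using posor_in_qedge[OF assms] by (rule someI)
  then have "olab H (SOME y. y \<in> qedge H e) = olab H (posor H e)"
    by (simp add: qedge_def oclass_def foeq_olab)
  then show ?thesis by (simp add: tight_def fst_olab posor_def)
qed

definition tight_oedge :: "('v, 'e, 'b) lgraph \<Rightarrow> 'e \<times> bool \<Rightarrow> ('e \<times> bool) set \<times> bool" where
  "tight_oedge H y = (qedge H (fst y), snd y = snd (lab H (fst y)))"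

lemma tight_oedge_oinv: "tight_oedge H (oinv y) = oinv (tight_oedge H y)"
  by (auto simp: tight_oedge_def oinv_def)

lemma tight_oedge_in_oedges: "y \<in> oedges H \<Longrightarrow> tight_oedge H y \<in> oedges (tight H)"
  by (auto simp: tight_oedge_def oedges_def tight_def)

lemma oinit_tight_oedge:
  assumes "y \<in> oedges H"
  shows "oinit (tight H) (tight_oedge H y) = vclass H (oinit H y)"
proof (cases "snd y = snd (lab H (fst y))")
  case True
  then have "oinit (tight H) (tight_oedge H y) = {v. \<exists>z. foeq H y z \<and> fveq H (oinit H z) v}"
    by (cases y) (simp add: tight_oedge_def oinit_def tight_def qedge_def oclass_def posor_def)
  also have "\<dots> = vclass H (oinit H y)"
    unfolding vclass_def by (blast intro: fv_trans fv_init fo_refl assms)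
  finally show ?thesis .
next
  case False
  then have "oinit (tight H) (tight_oedge H y) =
      {v. \<exists>z. foeq H (oinv y) z \<and> fveq H (oterm H z) v}"
    by (cases y) (simp add: tight_oedge_def oinit_def tight_def qedge_def oclass_def posor_def
        oinv_def)
  also have "\<dots> = vclass H (oinit H y)"
    unfolding vclass_def
  proof (rule set_eqI, unfold mem_Collect_eq, rule iffI)
    fix v assume "\<exists>z. foeq H (oinv y) z \<and> fveq H (oterm H z) v"
    then obtain z where z: "foeq H (oinv y) z" "fveq H (oterm H z) v" by auto
    have "foeq H y (oinv z)" using fo_inv[OF z(1)] by simp
    then have "fveq H (oinit H y) (oterm H z)" using fv_init by fastforce
    then show "fveq H (oinit H y) v" using z(2) by (rule fv_trans)
  next
    fix v assume "fveq H (oinit H y) v"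
    moreover have "foeq H (oinv y) (oinv y)" using assms by (intro fo_refl) simp
    ultimately show "\<exists>z. foeq H (oinv y) z \<and> fveq H (oterm H z) v" using oterm_oinv by metis
  qed
  finally show ?thesis .
qed

lemma oterm_tight_oedge:
  assumes "y \<in> oedges H"
  shows "oterm (tight H) (tight_oedge H y) = vclass H (oterm H y)"
  using oinit_tight_oedge[of "oinv y" H] assms by (simp add: tight_oedge_oinv)

lemma tight_oedge_eq_oinv:
  assumes "x \<in> oedges H" "y \<in> oedges H" "tight_oedge H y = oinv (tight_oedge H x)"
  shows "foeq H y (oinv x)"
proof -
  have q: "qedge H (fst y) = qedge H (fst x)" and
    d: "(snd y = snd (lab H (fst y))) = (\<not> (snd x = snd (lab H (fst x))))"
    using assms(3) by (auto simp: tight_oedge_def oinv_def)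
  have "fst y \<in> edges H" using assms(2) by (cases y) (simp add: oedges_def)
  then have "posor H (fst y) \<in> qedge H (fst x)" using q posor_in_qedge by metis
  then have f: "foeq H (posor H (fst x)) (posor H (fst y))"
    by (simp add: qedge_def oclass_def)
  show ?thesis
  proof (cases "snd x = snd (lab H (fst x))")
    case True
    then have "x = posor H (fst x)" "y = oinv (posor H (fst y))" using d
      by (cases x, cases y, simp add: posor_def oinv_def)+
    then show ?thesis using fo_inv[OF fo_sym[OF f]] by metis
  next
    case False
    then have "oinv x = posor H (fst x)" "y = posor H (fst y)" using d
      by (cases x, cases y, simp add: posor_def oinv_def)+
    then show ?thesis using fo_sym[OF f] by metis
  qed
qed

definition folded_step :: "('v, 'e, 'b) lgraph \<Rightarrow> 'e \<times> bool \<Rightarrow> 'e \<times> bool \<Rightarrow> bool" where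
  "folded_step H x y \<longleftrightarrow> fveq H (oterm H x) (oinit H y) \<and> \<not> foeq H y (oinv x)"

lemma folded_step_rev: "folded_step H x y \<Longrightarrow> folded_step H (oinv y) (oinv x)"
  unfolding folded_step_def by (auto intro: fv_sym fo_sym)

lemma reduced_step_tight_oedge:
  assumes "x \<in> oedges H" "y \<in> oedges H" "folded_step H x y"
  shows "reduced_step (tight H) (tight_oedge H x) (tight_oedge H y)"
  using assms oinit_tight_oedge oterm_tight_oedge vclass_eq tight_oedge_eq_oinv
  unfolding folded_step_def reduced_step_def by metis

lemma qedge_in_core_edges_tight:
  assumes "p \<noteq> []" "set p \<subseteq> oedges H" "cyclically (folded_step H) p" "y \<in> set p"
  shows "qedge H (fst y) \<in> core_edges (tight H)"
proof -
  have "set (map (tight_oedge H) p) \<subseteq> oedges (tight H)"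
    using assms(2) tight_oedge_in_oedges by fastforce
  moreover have "cyclically (reduced_step (tight H)) (map (tight_oedge H) p)"
    unfolding cyclically_map
    using assms(2) by (auto intro: cyclically_mono[OF assms(3)] reduced_step_tight_oedge)
  ultimately have "immersed_loop (tight H) (map (tight_oedge H) p)"
    using assms(1) by (simp add: immersed_loop_iff_cyclically)
  moreover have "(qedge H (fst y), snd (tight_oedge H y)) \<in> set (map (tight_oedge H) p)"
    using assms(4) by (auto simp: tight_oedge_def)
  moreover have "qedge H (fst y) \<in> edges (tight H)"
    using assms(2,4) by (cases y) (auto simp: tight_def oedges_def)
  ultimately show ?thesis unfolding core_edges_def by blast
qed

subsection \<open>Tags for the folding of alpha G\<close>

locale whitehead_fold =
  fixes b :: "'b slabel" and A :: "'b slabel set" and G :: "('v, 'e, 'b) lgraph"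
  assumes tight: "tight_graph G"
begin

abbreviation "S \<equiv> subdiv (whw b A) G"
abbreviation "T \<equiv> tight S"

definition word_len :: "'e \<Rightarrow> nat" where "word_len e = length (whw b A (lab G e))"
abbreviation cpos :: "'e \<Rightarrow> nat" where "cpos e \<equiv> cidx b A (lab G e)"
definition csub :: "'e \<times> bool \<Rightarrow> ('e \<times> nat) \<times> bool" where
  "csub x = ((fst x, cpos (fst x)), snd x)"
(* For an oriented edge x of G, bhead x is the subedge
  labelled b with which alpha(x) starts when olab G x is in A; for x = (e, False) it is the
  last subedge of e. *)
definition bhead :: "'e \<times> bool \<Rightarrow> ('e \<times> nat) \<times> bool" where
  "bhead x = (if snd x then ((fst x, 0), True) else ((fst x, word_len (fst x) - 1), False))"
definition bsub :: "'e \<times> bool \<Rightarrow> ('e \<times> nat) \<times> bool" where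
  "bsub x = ((fst x, 0), snd x)"
definition is_b :: "'e \<times> bool \<Rightarrow> bool" where
  "is_b x \<longleftrightarrow> fst (lab G (fst x)) = fst b"

lemma subdiv_simps:
  "edges S = {(e, k). e \<in> edges G \<and> k < word_len e}"
  "src S = (\<lambda>(e, k). subpt (whw b A) G e k)"
  "tgt S = (\<lambda>(e, k). subpt (whw b A) G e (Suc k))"
  "lab S = (\<lambda>(e, k). whw b A (lab G e) ! k)"
  by (auto simp: subdiv_def word_len_def)

lemma is_b_oinv [simp]: "is_b (oinv x) = is_b x" by (simp add: is_b_def)

lemma is_b_olab: "olab G y = b \<Longrightarrow> is_b y" "olab G y = linv b \<Longrightarrow> is_b y"
  by (metis fst_olab is_b_def fst_linv)+

lemma non_b_olab_neq:
  "\<not> is_b x \<Longrightarrow> olab G x \<noteq> b \<and> olab G x \<noteq> linv b \<and> b \<noteq> olab G x \<and> linv b \<noteq> olab G x"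
  using is_b_olab by metis

lemma csub_props:
  assumes "x \<in> oedges G" "\<not> is_b x"
  shows "csub x \<in> oedges S" "olab S (csub x) = olab G x" "csub (oinv x) = oinv (csub x)"
    "olab G x \<notin> A \<Longrightarrow> oinit S (csub x) = Inl (oinit G x)"
proof -
  obtain e d where x: "x = (e, d)" by (cases x)
  have e: "e \<in> edges G" using assms x by (auto simp: oedges_def)
  have nb: "fst (lab G e) \<noteq> fst b" using assms x by (simp add: is_b_def)
  show "csub x \<in> oedges S" using e nb
    by (simp add: x csub_def oedges_def subdiv_simps word_len_def length_whw)
  show "olab S (csub x) = olab G x" using nb
    by (simp add: x csub_def olab_def subdiv_simps whw_nth_cidx)
  show "csub (oinv x) = oinv (csub x)" by (simp add: x csub_def oinv_def)
  show "olab G x \<notin> A \<Longrightarrow> oinit S (csub x) = Inl (oinit G x)" using nb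
    by (cases d) (auto simp: x csub_def oinit_def olab_def subdiv_simps cidx_eq length_whw
        subpt_def)
qed

lemma bhead_props:
  assumes "x \<in> oedges G" "\<not> is_b x" "olab G x \<in> A"
  shows "bhead x \<in> oedges S" "olab S (bhead x) = b" "oinit S (bhead x) = Inl (oinit G x)"
    "oterm S (bhead x) = oinit S (csub x)"
proof -
  obtain e d where x: "x = (e, d)" by (cases x)
  have e: "e \<in> edges G" using assms x by (auto simp: oedges_def)
  have nb: "fst (lab G e) \<noteq> fst b" using assms x by (simp add: is_b_def)
  show "bhead x \<in> oedges S" using e nb
    by (simp add: x bhead_def oedges_def subdiv_simps word_len_def length_whw)
  show "olab S (bhead x) = b" using nb assms(3)
    by (cases d) (auto simp: x bhead_def olab_def subdiv_simps word_len_def whw_non_b nth_append)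
  show "oinit S (bhead x) = Inl (oinit G x)" using nb assms(3)
    by (cases d) (auto simp: x bhead_def oinit_def olab_def subdiv_simps word_len_def
        length_whw subpt_def)
  show "oterm S (bhead x) = oinit S (csub x)" using nb assms(3)
    by (cases d) (auto simp: x bhead_def csub_def oinit_def oterm_def olab_def subdiv_simps
        word_len_def cidx_eq length_whw subpt_def)
qed

lemma bsub_props:
  assumes "x \<in> oedges G" "is_b x"
  shows "bsub x \<in> oedges S" "olab S (bsub x) = olab G x" "oinit S (bsub x) = Inl (oinit G x)"
    "oterm S (bsub x) = Inl (oterm G x)" "bsub (oinv x) = oinv (bsub x)"
proof -
  obtain e d where x: "x = (e, d)" by (cases x)
  have e: "e \<in> edges G" using assms x by (auto simp: oedges_def)
  have lab_b: "fst (lab G e) = fst b" using assms x by (simp add: is_b_def)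
  show "bsub x \<in> oedges S" using e lab_b
    by (simp add: x bsub_def oedges_def subdiv_simps word_len_def whw_b)
  show "olab S (bsub x) = olab G x" using lab_b
    by (cases d) (auto simp: x bsub_def olab_def subdiv_simps whw_b)
  show "oinit S (bsub x) = Inl (oinit G x)" using lab_b
    by (cases d) (auto simp: x bsub_def oinit_def subdiv_simps whw_b subpt_def)
  show "oterm S (bsub x) = Inl (oterm G x)" using lab_b
    by (cases d) (auto simp: x bsub_def oterm_def subdiv_simps whw_b subpt_def)
  show "bsub (oinv x) = oinv (bsub x)" by (simp add: x bsub_def oinv_def)
qed

lemma tight_eqI: "x \<in> oedges G \<Longrightarrow> y \<in> oedges G \<Longrightarrow> oinit G x = oinit G y \<Longrightarrow>
    olab G x = olab G y \<Longrightarrow> x = y"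
  using tight unfolding tight_graph_def by blast

(* Names of the vertices of the folded graph: a vertex v of G keeps the name Inl v, and the
  subdivision vertex reached from v by a letter b gets the name b_target v, which is the end of
  the b-edge of G at v if there is one, and a fresh name otherwise. *)
definition b_target :: "'v \<Rightarrow> 'v + 'v" where
  "b_target v = (if \<exists>x\<in>oedges G. oinit G x = v \<and> olab G x = b
     then Inl (oterm G (SOME x. x \<in> oedges G \<and> oinit G x = v \<and> olab G x = b)) else Inr v)"

lemma b_target_oinit:
  assumes "x \<in> oedges G" "olab G x = b"
  shows "b_target (oinit G x) = Inl (oterm G x)"
proof -
  let ?P = "\<lambda>y. y \<in> oedges G \<and> oinit G y = oinit G x \<and> olab G y = b"
  have "?P x" using assms by auto
  then have "?P (SOME y. ?P y)" by (rule someI)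
  then have "(SOME y. ?P y) = x" using tight_eqI assms by auto
  then show ?thesis using assms unfolding b_target_def by auto
qed

lemma b_target_inj:
  assumes "b_target v = b_target w"
  shows "v = w"
proof (cases "\<exists>x\<in>oedges G. oinit G x = v \<and> olab G x = b")
  case True
  then obtain x where x: "x \<in> oedges G" "oinit G x = v" "olab G x = b" by auto
  show ?thesis
  proof (cases "\<exists>x\<in>oedges G. oinit G x = w \<and> olab G x = b")
    case True
    then obtain y where y: "y \<in> oedges G" "oinit G y = w" "olab G y = b" by auto
    have "oterm G x = oterm G y"
      using assms b_target_oinit[OF x(1,3)] b_target_oinit[OF y(1,3)] x y by simp
    then have "oinv x = oinv y" using tight_eqI[of "oinv x" "oinv y"] x y by simp
    then show ?thesis using x y by simp
  next
    case False
    then have "b_target w = Inr w" unfolding b_target_def by auto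
    then show ?thesis using assms b_target_oinit[OF x(1,3)] x by simp
  qed
next
  case False
  then have "b_target v = Inr v" unfolding b_target_def by auto
  then show ?thesis using assms unfolding b_target_def by (auto split: if_splits)
qed

definition vtag :: "'v + 'e \<times> nat \<Rightarrow> 'v + 'v" where
  "vtag z = (case z of Inl v \<Rightarrow> Inl v
     | Inr (e, k) \<Rightarrow> (if k = 1 \<and> lab G e \<in> A then b_target (src G e) else b_target (tgt G e)))"

definition csub_init_tag :: "'e \<times> bool \<Rightarrow> 'v + 'v" where
  "csub_init_tag x = (if olab G x \<in> A then b_target (oinit G x) else Inl (oinit G x))"

lemma vtag_csub:
  assumes "x \<in> oedges G" "\<not> is_b x"
  shows "vtag (oinit S (csub x)) = csub_init_tag x"
proof -
  obtain e d where x: "x = (e, d)" by (cases x)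
  have nb: "fst (lab G e) \<noteq> fst b" using assms x by (simp add: is_b_def)
  show ?thesis using nb
    by (cases d) (auto simp: x csub_def csub_init_tag_def vtag_def oinit_def olab_def
        subdiv_simps cidx_eq length_whw subpt_def)
qed

lemma non_b_subedge_csub:
  assumes "y \<in> oedges S" "fst (olab S y) \<noteq> fst b"
  shows "\<exists>x. x \<in> oedges G \<and> \<not> is_b x \<and> y = csub x"
proof -
  obtain e k d where y: "y = ((e, k), d)" by (cases y) auto
  have e: "e \<in> edges G" "k < word_len e" using assms y by (auto simp: oedges_def subdiv_simps)
  have lab: "fst (whw b A (lab G e) ! k) \<noteq> fst b" using assms y by (simp add: subdiv_simps fst_olab)
  have nb: "fst (lab G e) \<noteq> fst b"
    using lab e by (auto simp: whw_b word_len_def)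
  have "k = cpos e" using fst_whw_nth_non_b[OF nb, of k A] e lab by (simp add: word_len_def)
  then show ?thesis using e nb
    by (intro exI[of _ "(e, d)"]) (simp add: y csub_def is_b_def oedges_def)
qed

lemma b_subedge_cases:
  assumes "y \<in> oedges S" "olab S y = b"
  obtains (bsub) x where "x \<in> oedges G" "olab G x = b" "y = bsub x"
  | (bhead) x where "x \<in> oedges G" "\<not> is_b x" "olab G x \<in> A" "y = bhead x"
proof -
  obtain e k d where y: "y = ((e, k), d)" by (cases y) auto
  have e: "e \<in> edges G" "k < word_len e" using assms y by (auto simp: oedges_def subdiv_simps)
  have ed: "(e, d) \<in> oedges G" using e by (simp add: oedges_def)
  have "fst (olab S y) = fst b" using assms(2) by simp
  then have lab: "fst (whw b A (lab G e) ! k) = fst b"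
    by (simp add: y subdiv_simps fst_olab)
  show thesis
  proof (cases "fst (lab G e) = fst b")
    case True
    then have "y = bsub (e, d)" using e by (simp add: y bsub_def word_len_def whw_b)
    then show thesis
      using bsub_props(2)[OF ed] True assms(2) by (intro that(1)[OF ed]) (auto simp: is_b_def)
  next
    case False
    have "k \<noteq> cidx b A (lab G e)" using whw_nth_cidx[OF False, of A] lab False by auto
    then have "(k = 0 \<and> lab G e \<in> A \<and> whw b A (lab G e) ! k = b) \<or>
        (k = Suc (cidx b A (lab G e)) \<and> linv (lab G e) \<in> A \<and> whw b A (lab G e) ! k = linv b)"
      using whw_nth_other[OF False, of k A] e by (simp add: word_len_def)
    then show thesis
    proof (elim disjE conjE)
      assume "k = 0" "lab G e \<in> A" "whw b A (lab G e) ! k = b"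
      then have "olab S y = (if d then b else linv b)" by (simp add: y olab_def subdiv_simps)
      then have "d" "y = bhead (e, True)"
        using assms(2) y \<open>k = 0\<close> by (auto simp: bhead_def split: if_splits)
      then show thesis using that(2)[of "(e, True)"] e False \<open>lab G e \<in> A\<close>
        by (simp add: oedges_def is_b_def olab_def)
    next
      assume "k = Suc (cidx b A (lab G e))" "linv (lab G e) \<in> A" "whw b A (lab G e) ! k = linv b"
      then have "olab S y = (if d then linv b else b)" by (simp add: y olab_def subdiv_simps)
      then have "\<not> d" "y = bhead (e, False)"
        using assms(2) y False \<open>k = Suc (cidx b A (lab G e))\<close> \<open>linv (lab G e) \<in> A\<close>
        by (auto simp: bhead_def word_len_def length_whw split: if_splits)
      then show thesis using that(2)[of "(e, False)"] e False \<open>linv (lab G e) \<in> A\<close>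
        by (simp add: oedges_def is_b_def olab_def)
    qed
  qed
qed

lemma vtag_bsub:
  assumes "x \<in> oedges G" "olab G x = b"
  shows "vtag (oinit S (bsub x)) = Inl (oinit G x)"
    and "vtag (oterm S (bsub x)) = b_target (oinit G x)"
  using bsub_props[OF assms(1) is_b_olab(1)[OF assms(2)]] b_target_oinit[OF assms]
  by (simp_all add: vtag_def)

lemma vtag_bhead:
  assumes "x \<in> oedges G" "\<not> is_b x" "olab G x \<in> A"
  shows "vtag (oinit S (bhead x)) = Inl (oinit G x)"
    and "vtag (oterm S (bhead x)) = b_target (oinit G x)"
  using bhead_props[OF assms] vtag_csub[OF assms(1,2)] assms(3)
  by (simp_all add: vtag_def csub_init_tag_def)

lemma b_subedge_vtag:
  assumes "y \<in> oedges S" "olab S y = b"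
  obtains v where "vtag (oinit S y) = Inl v" "vtag (oterm S y) = b_target v"
  using assms
proof (cases rule: b_subedge_cases)
  case (bsub x)
  then show thesis using vtag_bsub[OF bsub(1,2)] that by simp
next
  case (bhead x)
  then show thesis using vtag_bhead[OF bhead(1-3)] that by simp
qed

(* Subedges carrying b^{+-1} are named by their initial vertex and label, all others by the
  oriented edge of G whose letter they carry. *)
definition etag :: "('e \<times> nat) \<times> bool \<Rightarrow> ('e \<times> bool) + (('v + 'v) \<times> 'b slabel)" where
  "etag y = (if fst (olab S y) \<noteq> fst b then Inl (fst (fst y), snd y)
            else Inr (vtag (oinit S y), olab S y))"

lemma etag_csub: "etag (csub x) = Inl x" if "x \<in> oedges G" "\<not> is_b x"
  using csub_props[OF that] that by (simp add: etag_def csub_def is_b_def fst_olab)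

lemma csub_init_tag_inj:
  assumes "x1 \<in> oedges G" "x2 \<in> oedges G" "olab G x1 = olab G x2"
    and "csub_init_tag x1 = csub_init_tag x2"
  shows "x1 = x2"
proof -
  have "oinit G x1 = oinit G x2"
    using assms b_target_inj unfolding csub_init_tag_def by (auto split: if_splits)
  then show ?thesis using tight_eqI assms by auto
qed

lemma vtag_oterm_b_subedges:
  assumes "o1 \<in> oedges S" "o2 \<in> oedges S" "olab S o1 = olab S o2" "fst (olab S o1) = fst b"
    and "vtag (oinit S o1) = vtag (oinit S o2)"
  shows "vtag (oterm S o1) = vtag (oterm S o2)"
proof (cases "olab S o1 = b")
  case True
  obtain v1 where "vtag (oinit S o1) = Inl v1" "vtag (oterm S o1) = b_target v1"
    using b_subedge_vtag assms(1) True by blast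
  moreover obtain v2 where "vtag (oinit S o2) = Inl v2" "vtag (oterm S o2) = b_target v2"
    using b_subedge_vtag assms(2,3) True by metis
  ultimately show ?thesis using assms(5) by simp
next
  case False
  then have "olab S (oinv o1) = b" "olab S (oinv o2) = b"
    using fst_eq_cases[of "olab S o1" b] assms(3,4) by auto
  obtain v1 where "vtag (oterm S o1) = Inl v1" "vtag (oinit S o1) = b_target v1"
    using b_subedge_vtag[of "oinv o1"] assms(1) \<open>olab S (oinv o1) = b\<close> by auto
  moreover obtain v2 where "vtag (oterm S o2) = Inl v2" "vtag (oinit S o2) = b_target v2"
    using b_subedge_vtag[of "oinv o2"] assms(2) \<open>olab S (oinv o2) = b\<close> by auto
  ultimately show ?thesis using assms(5) b_target_inj by metis
qed

lemma fold_tags_invariant: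
  "(fveq S u w \<longrightarrow> vtag u = vtag w) \<and> (foeq S y1 y2 \<longrightarrow> etag y1 = etag y2)"
proof (induction rule: fveq_foeq.induct)
  case (fv_init o1 o2)
  have o12: "o1 \<in> oedges S" "o2 \<in> oedges S" "olab S o1 = olab S o2"
    using foeq_oedges_olab fv_init by blast+
  show ?case
  proof (cases "fst (olab S o1) = fst b")
    case True
    then show ?thesis using fv_init.IH o12 by (auto simp: etag_def simp del: fst_olab)
  next
    case False
    obtain x1 where x1: "x1 \<in> oedges G" "\<not> is_b x1" "o1 = csub x1"
      using non_b_subedge_csub False o12 by blast
    obtain x2 where x2: "x2 \<in> oedges G" "\<not> is_b x2" "o2 = csub x2"
      using non_b_subedge_csub False o12 by metis
    have "x1 = x2" using fv_init.IH x1 x2 etag_csub by auto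
    then show ?thesis using x1 x2 by simp
  qed
next
  case (fo_inv o1 o2)
  have o12: "o1 \<in> oedges S" "o2 \<in> oedges S" "olab S o1 = olab S o2"
    using foeq_oedges_olab fo_inv by blast+
  show ?case
  proof (cases "fst (olab S o1) = fst b")
    case False
    then show ?thesis using fo_inv.IH o12 by (auto simp: etag_def)
  next
    case True
    then have "vtag (oinit S o1) = vtag (oinit S o2)" using fo_inv.IH o12 by (simp add: etag_def)
    then have "vtag (oterm S o1) = vtag (oterm S o2)"
      using vtag_oterm_b_subedges o12 True by blast
    then show ?thesis using o12 True by (simp add: etag_def)
  qed
next
  case (fo_fold o1 o2)
  show ?case
  proof (cases "fst (olab S o1) = fst b")
    case True
    then show ?thesis using fo_fold by (simp add: etag_def)
  next
    case False
    obtain x1 where x1: "x1 \<in> oedges G" "\<not> is_b x1" "o1 = csub x1"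
      using non_b_subedge_csub False fo_fold by blast
    obtain x2 where x2: "x2 \<in> oedges G" "\<not> is_b x2" "o2 = csub x2"
      using non_b_subedge_csub False fo_fold by (metis fst_olab)
    have "olab G x1 = olab G x2" using fo_fold x1 x2 csub_props by metis
    moreover have "csub_init_tag x1 = csub_init_tag x2" using fo_fold x1 x2 vtag_csub by metis
    ultimately have "x1 = x2" using csub_init_tag_inj x1 x2 by blast
    then show ?thesis using x1 x2 by simp
  qed
qed auto

lemma foeq_etag: "foeq S y1 y2 \<Longrightarrow> etag y1 = etag y2"
  using fold_tags_invariant by blast

subsection \<open>Lifting immersed loops\<close>

definition btail :: "'e \<times> bool \<Rightarrow> ('e \<times> nat) \<times> bool" where
  "btail x = oinv (bhead (oinv x))"

definition bheads :: "'e \<times> bool \<Rightarrow> (('e \<times> nat) \<times> bool) list" where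
  "bheads c' = (if olab G c' \<in> A then [bhead c'] else [])"

(* For a block c r c' of a reduced path in G, with r a run of b-edges, bridge c r c' is the
  path in S joining csub c to csub c' in the folded lift of the block: the b^{-1} with which
  alpha(c) ends cancels against the first edge of r, or against the b with which alpha(c')
  starts if r = []. Runs labelled b^{-1} are handled by reversing the block. *)
definition bridge_pos ::
    "'e \<times> bool \<Rightarrow> ('e \<times> bool) list \<Rightarrow> 'e \<times> bool \<Rightarrow> (('e \<times> nat) \<times> bool) list" where
  "bridge_pos c r c' = (if r = [] then
       (if olab G (oinv c) \<in> A \<and> olab G c' \<notin> A then [btail c] else []) @
       (if olab G c' \<in> A \<and> olab G (oinv c) \<notin> A then [bhead c'] else [])
     else map bsub (if olab G (oinv c) \<in> A then tl r else r) @ bheads c')"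

definition bridge ::
    "'e \<times> bool \<Rightarrow> ('e \<times> bool) list \<Rightarrow> 'e \<times> bool \<Rightarrow> (('e \<times> nat) \<times> bool) list" where
  "bridge c r c' = (if r \<noteq> [] \<and> olab G (hd r) = linv b
     then rev (map oinv (bridge_pos (oinv c') (rev (map oinv r)) (oinv c)))
     else bridge_pos c r c')"

lemma fveq_Inl_refl:
  assumes "x \<in> oedges G"
  shows "fveq S (Inl (oinit G x)) (Inl (oinit G x))"
proof (cases "is_b x")
  case True
  then show ?thesis using bsub_props[OF assms True] fveq_oinit_refl by metis
next
  case nb: False
  show ?thesis
  proof (cases "olab G x \<in> A")
    case True
    then show ?thesis using bhead_props[OF assms nb True] fveq_oinit_refl by metis
  next
    case False
    then show ?thesis using csub_props[OF assms nb] fveq_oinit_refl by metis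
  qed
qed

abbreviation b_run_lift :: "('e \<times> bool) list \<Rightarrow> 'e \<times> bool \<Rightarrow> (('e \<times> nat) \<times> bool) list" where
  "b_run_lift r c' \<equiv> map bsub r @ bheads c' @ [csub c']"

lemma b_run_lift_oedges:
  assumes "c' \<in> oedges G" "\<not> is_b c'" "set r \<subseteq> oedges G" "\<forall>y\<in>set r. olab G y = b"
  shows "set (b_run_lift r c') \<subseteq> oedges S"
proof -
  have "bsub y \<in> oedges S" if "y \<in> set r" for y
    using that assms(3,4) bsub_props(1) is_b_olab(1) by blast
  moreover have "set (bheads c') \<subseteq> oedges S"
    using bhead_props(1)[OF assms(1,2)] by (auto simp: bheads_def)
  ultimately show ?thesis using csub_props(1)[OF assms(1,2)] by auto
qed

lemma hd_b_run_lift: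
  assumes "c' \<in> oedges G" "\<not> is_b c'" "set r \<subseteq> oedges G" "\<forall>y\<in>set r. olab G y = b"
  shows "oinit S (hd (b_run_lift r c')) = Inl (oinit G (hd (r @ [c']))) \<and>
    (olab S (hd (b_run_lift r c')) = b \<or>
      r = [] \<and> olab G c' \<notin> A \<and> hd (b_run_lift r c') = csub c')"
proof (cases r)
  case Nil
  then show ?thesis
    using csub_props[OF assms(1,2)] bhead_props[OF assms(1,2)] by (auto simp: bheads_def)
next
  case (Cons y ys)
  then have "y \<in> oedges G" "olab G y = b" using assms(3,4) by auto
  then show ?thesis using Cons bsub_props is_b_olab by simp
qed

lemma b_run_lift_folded_steps:
  assumes "c' \<in> oedges G" "\<not> is_b c'" "set r \<subseteq> oedges G" "\<forall>y\<in>set r. olab G y = b"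
    "successively (reduced_step G) (r @ [c'])"
  shows "successively (folded_step S) (b_run_lift r c')"
  using assms(3-5)
proof (induction r)
  case Nil
  note c' = csub_props[OF assms(1,2)]
  show ?case
  proof (cases "olab G c' \<in> A")
    case True
    note hd = bhead_props[OF assms(1,2) True]
    have "\<not> foeq S (csub c') (oinv (bhead c'))"
      using foeq_olab[of S "csub c'" "oinv (bhead c')"] c' hd non_b_olab_neq[OF assms(2)] by auto
    moreover have "fveq S (oterm S (bhead c')) (oinit S (csub c'))"
      using hd fveq_oinit_refl[OF c'(1)] by simp
    ultimately show ?thesis using True by (simp add: bheads_def folded_step_def)
  qed (simp add: bheads_def)
next
  case (Cons y ys)
  let ?L = "b_run_lift ys c'"
  have y: "y \<in> oedges G" "olab G y = b" "is_b y" using Cons.prems is_b_olab by auto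
  note ysub = bsub_props[OF y(1,3)]
  have step: "reduced_step G y (hd (ys @ [c']))" "successively (reduced_step G) (ys @ [c'])"
    using Cons.prems(3) by (auto simp: successively_Cons)
  have ys: "set ys \<subseteq> oedges G" "\<forall>y\<in>set ys. olab G y = b" using Cons.prems by auto
  note hd = hd_b_run_lift[OF assms(1,2) ys]
  have "hd ?L \<in> set ?L" by (rule hd_in_set) simp
  then have "hd ?L \<in> oedges S" using b_run_lift_oedges[OF assms(1,2) ys] by auto
  then have "fveq S (oterm S (bsub y)) (oinit S (hd ?L))"
    using ysub hd Cons.prems step(1) fveq_oinit_refl[of "hd ?L" S] by (simp add: reduced_step_def)
  moreover have "\<not> foeq S (hd ?L) (oinv (bsub y))"
  proof
    assume "foeq S (hd ?L) (oinv (bsub y))"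
    then have "olab S (hd ?L) = linv b" using foeq_olab[of S] ysub(2) y(2) by fastforce
    then show False using hd csub_props(2)[OF assms(1,2)] non_b_olab_neq[OF assms(2)] by auto
  qed
  ultimately have "folded_step S (bsub y) (hd ?L)" by (simp add: folded_step_def)
  then show ?case using Cons.IH[OF ys step(2)] by (simp add: successively_Cons)
qed

lemma csub_b_run_folded_steps:
  assumes "c \<in> oedges G" "\<not> is_b c" "c' \<in> oedges G" "\<not> is_b c'" "set r \<subseteq> oedges G"
    "\<forall>y\<in>set r. olab G y = b" "successively (reduced_step G) (r @ [c'])"
    and "fveq S (oterm S (csub c)) (Inl (oinit G (hd (r @ [c']))))"
    and "r = [] \<and> olab G c' \<notin> A \<longrightarrow> c' \<noteq> oinv c"
  shows "successively (folded_step S) (csub c # b_run_lift r c') \<and>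
    set (b_run_lift r c') \<subseteq> oedges S"
proof -
  let ?L = "b_run_lift r c'"
  note hd = hd_b_run_lift[OF assms(3-6)]
  have "\<not> foeq S (hd ?L) (oinv (csub c))"
  proof
    assume f: "foeq S (hd ?L) (oinv (csub c))"
    then have l: "olab S (hd ?L) = linv (olab G c)"
      using foeq_olab[OF f] csub_props[OF assms(1,2)] by simp
    show False
    proof (cases "olab S (hd ?L) = b")
      case True
      then show ?thesis using l non_b_olab_neq[OF assms(2)] by (metis linv_linv)
    next
      case False
      then have h: "r = [] \<and> olab G c' \<notin> A \<and> hd ?L = csub c'" using hd by blast
      then have "etag (csub c') = etag (csub (oinv c))"
        using f csub_props(3)[OF assms(1,2)] foeq_etag by metis
      then have "c' = oinv c" using etag_csub assms(1-4) by simp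
      then show ?thesis using assms(9) h by blast
    qed
  qed
  then have "folded_step S (csub c) (hd ?L)" using assms(8) hd by (simp add: folded_step_def)
  then show ?thesis
    using b_run_lift_folded_steps[OF assms(3-7)] b_run_lift_oedges[OF assms(3-6)]
    by (simp add: successively_Cons)
qed

lemma bridge_pos_folded_steps_no_btail:
  assumes "c \<in> oedges G" "\<not> is_b c" "c' \<in> oedges G" "\<not> is_b c'" "set r \<subseteq> oedges G"
    "\<forall>y\<in>set r. olab G y = b" "successively (reduced_step G) (c # r @ [c'])"
    and "olab G (oinv c) \<notin> A"
  shows "successively (folded_step S) (csub c # bridge_pos c r c' @ [csub c']) \<and>
    set (bridge_pos c r c') \<subseteq> oedges S"
proof -
  have step: "reduced_step G c (hd (r @ [c']))" "successively (reduced_step G) (r @ [c'])"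
    using assms(7) by (auto simp: successively_Cons)
  have "oterm S (csub c) = Inl (oterm G c)"
    using csub_props[of "oinv c"] csub_props[OF assms(1,2)] assms(1,2,8) by simp
  moreover have "hd (r @ [c']) \<in> oedges G" using assms(3,5) by (cases r) auto
  ultimately have "fveq S (oterm S (csub c)) (Inl (oinit G (hd (r @ [c']))))"
    using step(1) fveq_Inl_refl by (simp add: reduced_step_def)
  moreover have "r = [] \<and> olab G c' \<notin> A \<longrightarrow> c' \<noteq> oinv c"
    using step(1) by (auto simp: reduced_step_def)
  moreover have "bridge_pos c r c' = map bsub r @ bheads c'"
    using assms(8) by (simp add: bridge_pos_def bheads_def)
  ultimately show ?thesis using csub_b_run_folded_steps[OF assms(1-6) step(2)] by simp
qed

lemma bridge_pos_folded_steps_btail_Nil: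
  assumes "c \<in> oedges G" "\<not> is_b c" "c' \<in> oedges G" "\<not> is_b c'"
    "reduced_step G c c'" "olab G (oinv c) \<in> A"
  shows "successively (folded_step S) (csub c # bridge_pos c [] c' @ [csub c'])"
proof -
  note c = csub_props[OF assms(1,2)] and c' = csub_props[OF assms(3,4)]
  note tl = bhead_props[of "oinv c"] assms(1,2,6)
  have v: "oterm G c = oinit G c'" "c' \<noteq> oinv c" using assms(5) by (auto simp: reduced_step_def)
  show ?thesis
  proof (cases "olab G c' \<in> A")
    case True
    note hd = bhead_props[OF assms(3,4) True]
    have "fveq S (oterm S (bhead (oinv c))) (oterm S (bhead c'))"
      using tl hd v fveq_Inl_refl[OF assms(3)] by (intro fveq_oterm_fold) auto
    then have "fveq S (oterm S (csub c)) (oinit S (csub c'))" using tl hd c by simp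
    moreover have "\<not> foeq S (csub c') (oinv (csub c))"
    proof
      assume "foeq S (csub c') (oinv (csub c))"
      then have "etag (csub c') = etag (csub (oinv c))" using foeq_etag c by simp
      then show False using etag_csub assms(1-4) v by simp
    qed
    ultimately show ?thesis using True assms(6) by (simp add: bridge_pos_def folded_step_def)
  next
    case False
    have t: "btail c \<in> oedges S" "olab S (btail c) = linv b"
      "oinit S (btail c) = oterm S (csub c)" "oterm S (btail c) = Inl (oterm G c)"
      using tl c by (auto simp: btail_def)
    have "folded_step S (csub c) (btail c)"
      using foeq_olab[of S "btail c" "oinv (csub c)"] t c non_b_olab_neq[OF assms(2)]
        fveq_oinit_refl[OF t(1)] by (auto simp: folded_step_def)
    moreover have "folded_step S (btail c) (csub c')"
      using foeq_olab[of S "csub c'" "oinv (btail c)"] t c' non_b_olab_neq[OF assms(4)]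
        c'(4)[OF False] v fveq_oinit_refl[OF c'(1)] by (auto simp: folded_step_def)
    ultimately show ?thesis using False assms(6) by (simp add: bridge_pos_def)
  qed
qed

lemma bridge_pos_folded_steps_btail_Cons:
  assumes "c \<in> oedges G" "\<not> is_b c" "c' \<in> oedges G" "\<not> is_b c'" "set (y # ys) \<subseteq> oedges G"
    "\<forall>y\<in>set (y # ys). olab G y = b" "successively (reduced_step G) (c # (y # ys) @ [c'])"
    and "olab G (oinv c) \<in> A"
  shows "successively (folded_step S) (csub c # bridge_pos c (y # ys) c' @ [csub c']) \<and>
    set (bridge_pos c (y # ys) c') \<subseteq> oedges S"
proof -
  note tl = bhead_props[of "oinv c"] assms(1,2,8)
  have y: "y \<in> oedges G" "olab G y = b" "is_b y" using assms(5,6) is_b_olab by auto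
  note ysub = bsub_props[OF y(1,3)]
  have step: "oterm G c = oinit G y" "reduced_step G y (hd (ys @ [c']))"
    "successively (reduced_step G) (ys @ [c'])"
    using assms(7) by (auto simp: successively_Cons reduced_step_def)
  have "fveq S (oterm S (bhead (oinv c))) (oterm S (bsub y))"
    using tl ysub y step(1) fveq_Inl_refl[OF y(1)] by (intro fveq_oterm_fold) simp_all
  then have "fveq S (oterm S (csub c)) (Inl (oinit G (hd (ys @ [c']))))"
    using tl ysub step(2) csub_props[OF assms(1,2)] by (simp add: reduced_step_def)
  moreover have "ys = [] \<and> olab G c' \<notin> A \<longrightarrow> c' \<noteq> oinv c" using assms(8) by auto
  moreover have "bridge_pos c (y # ys) c' = map bsub ys @ bheads c'"
    using assms(8) by (simp add: bridge_pos_def)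
  ultimately show ?thesis
    using csub_b_run_folded_steps[OF assms(1-4) _ _ step(3)] assms(5,6) by simp
qed

lemma bridge_pos_folded_steps:
  assumes "c \<in> oedges G" "\<not> is_b c" "c' \<in> oedges G" "\<not> is_b c'" "set r \<subseteq> oedges G"
    "\<forall>y\<in>set r. olab G y = b" "successively (reduced_step G) (c # r @ [c'])"
  shows "successively (folded_step S) (csub c # bridge_pos c r c' @ [csub c']) \<and>
    set (bridge_pos c r c') \<subseteq> oedges S"
proof (cases "olab G (oinv c) \<in> A")
  case True
  show ?thesis
  proof (cases r)
    case Nil
    have "set (bridge_pos c [] c') \<subseteq> oedges S"
      using bhead_props[of "oinv c"] bhead_props[OF assms(3,4)] assms(1,2)
      by (auto simp: bridge_pos_def btail_def)
    then show ?thesis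
      using bridge_pos_folded_steps_btail_Nil[OF assms(1-4) _ True] assms(7) Nil by simp
  next
    case (Cons y ys)
    then show ?thesis using bridge_pos_folded_steps_btail_Cons[OF assms[unfolded Cons] True] by simp
  qed
qed (rule bridge_pos_folded_steps_no_btail[OF assms])

lemma b_run_step_olab:
  assumes "x \<in> oedges G" "y \<in> oedges G" "is_b x" "is_b y" "reduced_step G x y"
  shows "olab G y = olab G x"
proof -
  have "fst (olab G y) = fst (olab G x)" using assms(3,4) by (simp add: is_b_def fst_olab)
  then have "olab G y = olab G x \<or> olab G y = linv (olab G x)" by (rule fst_eq_cases)
  moreover have "olab G y \<noteq> linv (olab G x)"
  proof
    assume "olab G y = linv (olab G x)"
    then have "y = oinv x" using tight_eqI[of y "oinv x"] assms by (simp add: reduced_step_def)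
    then show False using assms(5) by (simp add: reduced_step_def)
  qed
  ultimately show ?thesis by blast
qed

lemma b_run_olab: "set r \<subseteq> oedges G \<Longrightarrow> \<forall>y\<in>set r. is_b y \<Longrightarrow> successively (reduced_step G) r \<Longrightarrow>
    \<forall>y\<in>set r. olab G y = olab G (hd r)"
proof (induction r)
  case (Cons x r)
  show ?case
  proof (cases r)
    case Nil then show ?thesis by simp
  next
    case (Cons z zs)
    have "reduced_step G x z" "successively (reduced_step G) r"
      using Cons.prems \<open>r = z # zs\<close> by auto
    then have "olab G z = olab G x" using b_run_step_olab Cons.prems \<open>r = z # zs\<close> by auto
    then show ?thesis
      using Cons.IH Cons.prems \<open>r = z # zs\<close> \<open>successively (reduced_step G) r\<close> by auto
  qed
qed simp

lemma bridge_folded_steps: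
  assumes "c \<in> oedges G" "\<not> is_b c" "c' \<in> oedges G" "\<not> is_b c'" "set r \<subseteq> oedges G"
    "\<forall>y\<in>set r. is_b y" "successively (reduced_step G) (c # r @ [c'])"
  shows "successively (folded_step S) (csub c # bridge c r c' @ [csub c']) \<and>
    set (bridge c r c') \<subseteq> oedges S"
proof -
  have run_steps: "successively (reduced_step G) r" using assms(7)
    by (simp add: successively_Cons successively_append_iff)
  have run_lab: "\<forall>y\<in>set r. olab G y = olab G (hd r)" using b_run_olab[OF assms(5,6) run_steps] .
  show ?thesis
  proof (cases "r \<noteq> [] \<and> olab G (hd r) = linv b")
    case True
    let ?r2 = "rev (map oinv r)"
    have rev_lab: "\<forall>y\<in>set ?r2. olab G y = b" using run_lab True by auto
    have rev_oedges: "set ?r2 \<subseteq> oedges G" using assms(5) by auto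
    have rev_steps: "successively (reduced_step G) (oinv c' # ?r2 @ [oinv c])"
      using successively_rev_map_oinv[OF assms(7) reduced_step_rev] by simp
    have inv: "oinv c \<in> oedges G" "\<not> is_b (oinv c)" "oinv c' \<in> oedges G" "\<not> is_b (oinv c')"
      using assms by auto
    note rev_lift = bridge_pos_folded_steps[OF inv(3,4) inv(1,2) rev_oedges rev_lab rev_steps]
    have "successively (folded_step S)
        (rev (map oinv (csub (oinv c') # bridge_pos (oinv c') ?r2 (oinv c) @ [csub (oinv c)])))"
      using successively_rev_map_oinv[OF conjunct1[OF rev_lift] folded_step_rev] .
    moreover have
      "rev (map oinv (csub (oinv c') # bridge_pos (oinv c') ?r2 (oinv c) @ [csub (oinv c)]))
        = csub c # bridge c r c' @ [csub c']"
      using True csub_props(3)[OF assms(1,2)] csub_props(3)[OF assms(3,4)] by (simp add: bridge_def)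
    moreover have "set (bridge c r c') \<subseteq> oedges S" using rev_lift True by (auto simp: bridge_def)
    ultimately show ?thesis by simp
  next
    case False
    have "\<forall>y\<in>set r. olab G y = b"
    proof
      fix y assume y: "y \<in> set r"
      then have "r \<noteq> []" by auto
      have "fst (olab G (hd r)) = fst b" using assms(6) \<open>r \<noteq> []\<close> by (simp add: is_b_def fst_olab)
      then have "olab G (hd r) = b" using fst_eq_cases False \<open>r \<noteq> []\<close> by blast
      then show "olab G y = b" using run_lab y by simp
    qed
    moreover have "bridge c r c' = bridge_pos c r c'" using False unfolding bridge_def by argo
    ultimately show ?thesis using bridge_pos_folded_steps[OF assms(1-5) _ assms(7)] by simp
  qed
qed

lemma csub_in_core_edges:
  assumes "immersed_loop G p" "x \<in> set p" "\<not> is_b x"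
  shows "qedge S (fst (csub x)) \<in> core_edges T"
proof -
  obtain q where "immersed_loop G q" "hd q = x" using immersed_loop_rotate[OF assms(1,2)] .
  then have q: "q \<noteq> []" "set q \<subseteq> oedges G" "cyclically (reduced_step G) q" "hd q = x"
    by (simp_all add: immersed_loop_iff_cyclically)
  define bl where "bl = blocks is_b q"
  define m where "m = length bl"
  have bl: "bl \<noteq> []" "fst (hd bl) = x" using hd_blocks[OF q(1)] q(4) by (auto simp: bl_def)
  then have "m > 0" by (simp add: m_def)
  have block: "fst (bl ! t) \<in> oedges G \<and> \<not> is_b (fst (bl ! t)) \<and>
      set (snd (bl ! t)) \<subseteq> oedges G \<and> (\<forall>y\<in>set (snd (bl ! t)). is_b y)" if "t < m" for t
  proof -
    have mem: "(fst (bl ! t), snd (bl ! t)) \<in> set (blocks is_b q)"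
      using that by (simp add: m_def bl_def)
    show ?thesis
      using blocks_head[OF _ mem] blocks_run[OF mem] blocks_subset[OF mem] q assms(3) by auto
  qed
  have steps:
    "successively (reduced_step G) (fst (bl ! t) # snd (bl ! t) @ [fst (bl ! (Suc t mod m))])"
    if "t < m" for t
    using cyclically_blocks[OF q(3,1), of is_b] that unfolding cyclically_def m_def bl_def
    by (auto simp: split_def)
  define seg where
    "seg t = csub (fst (bl ! t)) # bridge (fst (bl ! t)) (snd (bl ! t)) (fst (bl ! (Suc t mod m)))"
    for t
  have seg: "successively (folded_step S) (seg t @ [hd (seg (Suc t mod m))]) \<and>
      set (seg t) \<subseteq> oedges S" if "t < m" for t
    using bridge_folded_steps[OF _ _ _ _ _ _ steps[OF that]] block[OF that]
      block[of "Suc t mod m"] csub_props(1) \<open>m > 0\<close> by (simp add: seg_def)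
  let ?p = "concat (map seg [0..<m])"
  have "cyclically (folded_step S) ?p"
    by (rule cyclically_concat_segments) (use \<open>m > 0\<close> seg in \<open>auto simp: seg_def\<close>)
  moreover have "set ?p \<subseteq> oedges S" using seg by fastforce
  moreover have "csub x \<in> set (seg 0)" using bl by (simp add: seg_def hd_conv_nth)
  then have "csub x \<in> set ?p" using \<open>m > 0\<close> by auto
  ultimately show ?thesis
    using qedge_in_core_edges_tight[of ?p S "csub x"] by (cases ?p) auto
qed

lemma posor_csub:
  assumes "\<not> is_b (e, d)"
  shows "posor S (e, cpos e) = csub (posor G e)"
  using assms by (simp add: posor_def csub_def subdiv_simps whw_nth_cidx is_b_def)

lemma qedge_csub_inj:
  assumes "e1 \<in> edges G" "\<not> is_b (e1, True)" "e2 \<in> edges G" "\<not> is_b (e2, True)"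
    and "qedge S (e1, cpos e1) = qedge S (e2, cpos e2)"
  shows "e1 = e2"
proof -
  have posor: "posor G e \<in> oedges G" "\<not> is_b (posor G e)" if "e \<in> edges G" "\<not> is_b (e, True)" for e
    using that by (auto simp: posor_def oedges_def is_b_def)
  have "(e2, cpos e2) \<in> edges S"
    using csub_props(1)[OF posor[OF assms(3,4)]] by (simp add: csub_def posor_def oedges_def)
  then have "posor S (e2, cpos e2) \<in> qedge S (e1, cpos e1)"
    using assms(5) posor_in_qedge by metis
  then have "foeq S (posor S (e1, cpos e1)) (posor S (e2, cpos e2))"
    by (simp add: qedge_def oclass_def)
  then have "etag (csub (posor G e1)) = etag (csub (posor G e2))"
    using foeq_etag posor_csub assms(2,4) by metis
  then show ?thesis
    using etag_csub posor[OF assms(1,2)] posor[OF assms(3,4)] by (simp add: posor_def)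
qed

lemma non_b_edge_tight_qedge_csub:
  assumes "E \<in> edges T" "fst (lab T E) \<noteq> fst b"
  obtains e where "e \<in> edges G" "\<not> is_b (e, True)" "E = qedge S (e, cpos e)"
proof -
  have "E \<in> qedge S ` edges S" using assms(1) by (simp add: tight_def)
  then obtain s where s: "s \<in> edges S" "E = qedge S s" by blast
  have "fst (olab S (s, True)) \<noteq> fst b"
    using assms(2) s fst_lab_tight_qedge[OF s(1)] by (simp add: olab_def)
  moreover have "(s, True) \<in> oedges S" using s by (simp add: oedges_def)
  ultimately obtain x where x: "x \<in> oedges G" "\<not> is_b x" "(s, True) = csub x"
    using non_b_subedge_csub by blast
  then show thesis
    using that[of "fst x"] s by (auto simp: csub_def oedges_def is_b_def)
qed

lemma qedge_csub_bij_core_edges: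
  assumes "is_core G"
  shows "bij_betw (\<lambda>e. qedge S (e, cpos e)) {e \<in> edges G. fst (lab G e) \<noteq> fst b}
    {E \<in> core_edges T. fst (lab T E) \<noteq> fst b}"
  unfolding bij_betw_def
proof (intro conjI inj_onI subset_antisym subsetI)
  fix e1 e2
  assume "e1 \<in> {e \<in> edges G. fst (lab G e) \<noteq> fst b}"
    and "e2 \<in> {e \<in> edges G. fst (lab G e) \<noteq> fst b}"
    "qedge S (e1, cpos e1) = qedge S (e2, cpos e2)"
  then show "e1 = e2" using qedge_csub_inj by (simp add: is_b_def)
next
  fix E assume "E \<in> (\<lambda>e. qedge S (e, cpos e)) ` {e \<in> edges G. fst (lab G e) \<noteq> fst b}"
  then obtain e where e: "e \<in> edges G" "fst (lab G e) \<noteq> fst b" "E = qedge S (e, cpos e)"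
    by blast
  have "edges (core G) = edges G" using assms by (simp add: is_core_def)
  then have "e \<in> core_edges G" using e(1) by (simp add: core_def)
  then obtain p d where "immersed_loop G p" "(e, d) \<in> set p" by (auto simp: core_edges_def)
  then have "E \<in> core_edges T"
    using csub_in_core_edges e by (force simp: csub_def is_b_def)
  moreover have "(e, cpos e) \<in> edges S"
    using e by (simp add: subdiv_simps word_len_def length_whw)
  ultimately show "E \<in> {E \<in> core_edges T. fst (lab T E) \<noteq> fst b}"
    using e fst_lab_tight_qedge[of "(e, cpos e)" S] by (simp add: subdiv_simps whw_nth_cidx)
next
  fix E assume "E \<in> {E \<in> core_edges T. fst (lab T E) \<noteq> fst b}"
  then have "E \<in> edges T" "fst (lab T E) \<noteq> fst b" by (auto simp: core_edges_def)
  then show "E \<in> (\<lambda>e. qedge S (e, cpos e)) ` {e \<in> edges G. fst (lab G e) \<noteq> fst b}"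
    by (rule non_b_edge_tight_qedge_csub) (auto simp: is_b_def)
qed

end

lemma bij_betw_Sigma_componentwise:
  assumes "\<And>i. i \<in> I \<Longrightarrow> bij_betw (f i) (X i) (Y i)"
  shows "bij_betw (\<lambda>(i, x). (i, f i x)) (Sigma I X) (Sigma I Y)"
  unfolding bij_betw_def
proof
  show "inj_on (\<lambda>(i, x). (i, f i x)) (Sigma I X)"
    using assms by (auto simp: inj_on_def bij_betw_def)
  show "(\<lambda>(i, x). (i, f i x)) ` Sigma I X = Sigma I Y"
    using assms by (force simp: bij_betw_def)
qed

lemma bij_betw_eprime:
  assumes "\<forall>G\<in>set Gs. tight_graph G \<and> is_core G"
  shows "bij_betw (eprime b A Gs)
    {(i, e). (i, e) \<in> seq_edges Gs \<and> fst (lab (Gs ! i) e) \<noteq> fst b}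
    {(i, E). (i, E) \<in> seq_edges (alpha_sharp b A Gs) \<and>
      fst (lab (alpha_sharp b A Gs ! i) E) \<noteq> fst b}"
proof -
  let ?S = "\<lambda>i. subdiv (whw b A) (Gs ! i)"
  let ?X = "\<lambda>i. {e \<in> edges (Gs ! i). fst (lab (Gs ! i) e) \<noteq> fst b}"
  let ?Y = "\<lambda>i. {E \<in> core_edges (tight (?S i)). fst (lab (tight (?S i)) E) \<noteq> fst b}"
  have "bij_betw (\<lambda>(i, e). (i, qedge (?S i) (e, cidx b A (lab (Gs ! i) e))))
      (SIGMA i:{..<length Gs}. ?X i) (SIGMA i:{..<length Gs}. ?Y i)"
  proof (rule bij_betw_Sigma_componentwise)
    fix i assume "i \<in> {..<length Gs}"
    then have "tight_graph (Gs ! i)" "is_core (Gs ! i)" using assms by auto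
    then show "bij_betw (\<lambda>e. qedge (?S i) (e, cidx b A (lab (Gs ! i) e))) (?X i) (?Y i)"
      by (simp add: whitehead_fold_def whitehead_fold.qedge_csub_bij_core_edges)
  qed
  moreover have "eprime b A Gs = (\<lambda>(i, e). (i, qedge (?S i) (e, cidx b A (lab (Gs ! i) e))))"
    by (simp add: eprime_def fun_eq_iff)
  moreover have "{(i, e). (i, e) \<in> seq_edges Gs \<and> fst (lab (Gs ! i) e) \<noteq> fst b} =
      (SIGMA i:{..<length Gs}. ?X i)"
    by (auto simp: seq_edges_def)
  moreover have "{(i, E). (i, E) \<in> seq_edges (alpha_sharp b A Gs) \<and>
      fst (lab (alpha_sharp b A Gs ! i) E) \<noteq> fst b} = (SIGMA i:{..<length Gs}. ?Y i)"
    by (auto simp: seq_edges_def alpha_sharp_def core_def)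
  ultimately show ?thesis by simp
qed

theorem lemma9p8:
  fixes Gs :: "('v, 'e, 'b::finite) lgraph list"
    and b :: "'b slabel" and A :: "'b slabel set"
  assumes "\<forall>G\<in>set Gs. wf_graph G \<and> finite_graph G \<and> connected_graph G \<and> tight_graph G \<and> is_core G"
    and "A \<subseteq> UNIV - {b, linv b}"
  shows "(\<forall>i e. (i, e) \<in> seq_edges Gs \<and> fst (lab (Gs ! i) e) \<noteq> fst b \<longrightarrow>
            (\<exists>!k. k < length (whw b A (lab (Gs ! i) e)) \<and>
                  fst (whw b A (lab (Gs ! i) e) ! k) = fst (lab (Gs ! i) e)) \<and>
            eprime b A Gs (i, e) \<in> seq_edges (alpha_sharp b A Gs))
       \<and> bij_betw (eprime b A Gs)
           {(i, e). (i, e) \<in> seq_edges Gs \<and> fst (lab (Gs ! i) e) \<noteq> fst b}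
           {(i, E). (i, E) \<in> seq_edges (alpha_sharp b A Gs) \<and>
                    fst (lab (alpha_sharp b A Gs ! i) E) \<noteq> fst b}"
proof -
  have bij: "bij_betw (eprime b A Gs)
    {(i, e). (i, e) \<in> seq_edges Gs \<and> fst (lab (Gs ! i) e) \<noteq> fst b}
    {(i, E). (i, E) \<in> seq_edges (alpha_sharp b A Gs) \<and>
      fst (lab (alpha_sharp b A Gs ! i) E) \<noteq> fst b}"
    using assms(1) by (intro bij_betw_eprime) auto
  show ?thesis
  proof (intro conjI allI impI bij)
    fix i e assume dom: "(i, e) \<in> seq_edges Gs \<and> fst (lab (Gs ! i) e) \<noteq> fst b"
    then show "\<exists>!k. k < length (whw b A (lab (Gs ! i) e)) \<and>
        fst (whw b A (lab (Gs ! i) e) ! k) = fst (lab (Gs ! i) e)"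
      by (intro whw_letter_unique) simp
    have "eprime b A Gs (i, e) \<in> {(i, E). (i, E) \<in> seq_edges (alpha_sharp b A Gs) \<and>
        fst (lab (alpha_sharp b A Gs ! i) E) \<noteq> fst b}"
      using bij_betw_apply[OF bij] dom by simp
    then show "eprime b A Gs (i, e) \<in> seq_edges (alpha_sharp b A Gs)"
      by (cases "eprime b A Gs (i, e)") simp
  qed
qed

end
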